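(* Let $\tau>1$, $\gamma>0$, $\alpha\in D_{\gamma,\tau}$ with partial quotients $a_1,a_2,\dots$ and convergents $p_n/q_n$. Then for every even $n\ge0$: $$\frac{p_n}{q_n}+\frac{\gamma}{q_n^{\tau+1}}<\frac{p_{n+2}}{q_{n+2}}-\frac{\gamma}{q_{n+2}^{\tau+1}}$$ holds if and only if $$a_{n+2}>\frac{q_n}{\gamma q_{n+1}}\cdot\frac{1}{\left(\frac{1}{\gamma}-\frac{q_{n+1}}{q_n^{\tau}}\right)-\frac{q_nq_{n+1}}{q_{n+2}^{\tau+1}}}-\frac{q_n}{q_{n+1}}.$$
   Context: For $x\in\mathbb{R}$, $\|x\|:=\min_{p\in\mathbb{Z}}|x-p|$; $\mathbb{N}=\{1,2,\dots\}$. For $\gamma>0,\tau\ge1$, $D_{\gamma,\tau}:=\{\alpha\in(0,1): \|q\alpha\|\ge\gamma/q^\tau\ \forall q\in\mathbb{N}\}$; its elements are irrational. For irrational $\alpha\in(0,1)$ write $\alpha=\cfrac{1}{a_1+\cfrac{1}{a_2+\cdots}}$ (partial quotients $a_n\in\mathbb{N}$), and let $p_n/q_n$ ($n\ge0$) be its convergents: $p_{-1}=1,q_{-1}=0,p_0=0,q_0=1$, $p_n=a_np_{n-1}+p_{n-2}$, $q_n=a_nq_{n-1}+q_{n-2}$. *)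

theory Defs
  imports Complex_Main
begin

definition dist_int :: "real \<Rightarrow> real" where
  "dist_int x = (INF p::int. \<bar>x - of_int p\<bar>)"

definition Dioph :: "real \<Rightarrow> real \<Rightarrow> real set" where
  "Dioph \<gamma> \<tau> = {\<alpha>. 0 < \<alpha> \<and> \<alpha> < 1 \<and>
      (\<forall>q::nat. q \<ge> 1 \<longrightarrow> dist_int (real q * \<alpha>) \<ge> \<gamma> / real q powr \<tau>)}"

fun cf_rem :: "real \<Rightarrow> nat \<Rightarrow> real" where
  "cf_rem \<alpha> 0 = \<alpha>"
| "cf_rem \<alpha> (Suc k) = frac (1 / cf_rem \<alpha> k)"

text \<open>Partial quotients: cf_a alpha n = a_n for n >= 1, a_n = floor(1/x_(n-1)).\<close>
definition cf_a :: "real \<Rightarrow> nat \<Rightarrow> int" where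
  "cf_a \<alpha> n = \<lfloor>1 / cf_rem \<alpha> (n - 1)\<rfloor>"

text \<open>Shifted convergent recursions: cf_P alpha k = p_(k-1), cf_Q alpha k = q_(k-1).\<close>
fun cf_P :: "real \<Rightarrow> nat \<Rightarrow> int" where
  "cf_P \<alpha> 0 = 1"
| "cf_P \<alpha> (Suc 0) = 0"
| "cf_P \<alpha> (Suc (Suc k)) = cf_a \<alpha> (Suc k) * cf_P \<alpha> (Suc k) + cf_P \<alpha> k"

fun cf_Q :: "real \<Rightarrow> nat \<Rightarrow> int" where
  "cf_Q \<alpha> 0 = 0"
| "cf_Q \<alpha> (Suc 0) = 1"
| "cf_Q \<alpha> (Suc (Suc k)) = cf_a \<alpha> (Suc k) * cf_Q \<alpha> (Suc k) + cf_Q \<alpha> k"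

definition cf_p :: "real \<Rightarrow> nat \<Rightarrow> int" where
  "cf_p \<alpha> n = cf_P \<alpha> (Suc n)"

definition cf_q :: "real \<Rightarrow> nat \<Rightarrow> int" where
  "cf_q \<alpha> n = cf_Q \<alpha> (Suc n)"

end

theory Submission
  imports Defs
begin

text \<open>
  Write \<open>x(k)\<close> for the Gauss-map remainder \<open>cf_rem \<alpha> k\<close>. For even \<open>n\<close> the determinant
  identity gives \<open>p(n+2)/q(n+2) - p(n)/q(n) = a(n+2)/(q(n) q(n+2))\<close>, so the first inequality reads
  \<open>\<gamma>/(q(n) q(n)^\<tau>) + \<gamma>/q(n+2)^(\<tau>+1) < a(n+2)/(q(n) q(n+2))\<close>. Substituting
  \<open>q(n+2) = a(n+2) q(n+1) + q(n)\<close> (but keeping \<open>q(n+2)^(\<tau>+1)\<close> as an independent positive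
  quantity) and solving for \<open>a(n+2)\<close> gives the second inequality, provided the bracket
  \<open>D = 1/\<gamma> - q(n+1)/q(n)^\<tau> - q(n) q(n+1)/q(n+2)^(\<tau>+1)\<close> is positive. This is where the
  Diophantine condition enters: \<open>\<gamma>/q(n)^\<tau> \<le> |q(n) \<alpha> - p(n)| = 1/(q(n+1) + q(n) x(n+1))\<close>, and
  \<open>x(n+1) q(n+2) > q(n)\<close> makes the last term of \<open>D\<close> smaller than \<open>q(n) x(n+1)/q(n)^\<tau>\<close>.
\<close>

\<comment> \<open>Remainders are unfolded only via \<open>inverse_cf_rem\<close>; \<open>simp\<close> would build nested \<open>frac\<close> terms.\<close>
declare cf_rem.simps(2) [simp del]

lemma cf_rem_not_Rats:
  assumes "\<alpha> \<notin> \<rat>"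
  shows "cf_rem \<alpha> k \<notin> \<rat>"
proof (induction k)
  case 0
  then show ?case using assms by simp
next
  case (Suc k)
  have "1 / cf_rem \<alpha> k \<notin> \<rat>"
    using Suc Rats_divide[OF Rats_1, of "1 / cf_rem \<alpha> k"] by auto
  then show ?case
    using Rats_add[of "frac (1 / cf_rem \<alpha> k)" "of_int \<lfloor>1 / cf_rem \<alpha> k\<rfloor>"]
    by (auto simp: cf_rem.simps frac_def)
qed

lemma cf_rem_pos:
  assumes "\<alpha> \<notin> \<rat>" and "0 < \<alpha>"
  shows "0 < cf_rem \<alpha> k"
proof (cases k)
  case (Suc j)
  have "1 / cf_rem \<alpha> j \<notin> \<int>"
    using cf_rem_not_Rats[OF assms(1), of j] Ints_subset_Rats
      Rats_divide[OF Rats_1, of "1 / cf_rem \<alpha> j"]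
    by auto
  then show ?thesis using Suc by (simp add: cf_rem.simps)
qed (use assms in simp)

lemma cf_rem_less_1:
  assumes "\<alpha> < 1"
  shows "cf_rem \<alpha> k < 1"
  using assms frac_lt_1 by (cases k) (auto simp: cf_rem.simps)

lemma inverse_cf_rem: "1 / cf_rem \<alpha> k = cf_a \<alpha> (Suc k) + cf_rem \<alpha> (Suc k)"
  by (simp add: cf_a_def cf_rem.simps frac_def)

lemma cf_a_ge_1:
  assumes "\<alpha> \<notin> \<rat>" and "0 < \<alpha>" and "\<alpha> < 1"
  shows "1 \<le> cf_a \<alpha> (Suc k)"
proof -
  have "1 \<le> 1 / cf_rem \<alpha> k"
    using cf_rem_pos[OF assms(1,2), of k] cf_rem_less_1[OF assms(3), of k] by simp
  then show ?thesis by (simp add: cf_a_def)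
qed

lemma cf_p_0 [simp]: "cf_p \<alpha> 0 = 0"
  and cf_p_1 [simp]: "cf_p \<alpha> (Suc 0) = 1"
  and cf_q_0 [simp]: "cf_q \<alpha> 0 = 1"
  and cf_q_1 [simp]: "cf_q \<alpha> (Suc 0) = cf_a \<alpha> (Suc 0)"
  by (simp_all add: cf_p_def cf_q_def)

lemma cf_p_Suc_Suc [simp]:
  "cf_p \<alpha> (Suc (Suc n)) = cf_a \<alpha> (Suc (Suc n)) * cf_p \<alpha> (Suc n) + cf_p \<alpha> n"
  and cf_q_Suc_Suc [simp]:
  "cf_q \<alpha> (Suc (Suc n)) = cf_a \<alpha> (Suc (Suc n)) * cf_q \<alpha> (Suc n) + cf_q \<alpha> n"
  by (simp_all add: cf_p_def cf_q_def)

lemma cf_q_ge_1: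
  assumes "\<alpha> \<notin> \<rat>" and "0 < \<alpha>" and "\<alpha> < 1"
  shows "1 \<le> cf_q \<alpha> n"
proof (induction n rule: induct_nat_012)
  case (ge2 n)
  have "1 * cf_q \<alpha> (Suc n) \<le> cf_a \<alpha> (Suc (Suc n)) * cf_q \<alpha> (Suc n)"
    using cf_a_ge_1[OF assms] ge2 by (intro mult_right_mono) auto
  with ge2 show ?case by (simp only: cf_q_Suc_Suc)
qed (use cf_a_ge_1[OF assms, of 0] in simp_all)

lemma cf_q_le_Suc:
  assumes "\<alpha> \<notin> \<rat>" and "0 < \<alpha>" and "\<alpha> < 1"
  shows "cf_q \<alpha> n \<le> cf_q \<alpha> (Suc n)"
proof (cases n)
  case 0
  then show ?thesis using cf_a_ge_1[OF assms, of 0] by simp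
next
  case (Suc m)
  have "1 * cf_q \<alpha> (Suc m) \<le> cf_a \<alpha> (Suc (Suc m)) * cf_q \<alpha> (Suc m)"
    using cf_a_ge_1[OF assms] cf_q_ge_1[OF assms, of "Suc m"] by (intro mult_right_mono) auto
  with Suc cf_q_ge_1[OF assms, of m] show ?thesis by simp
qed

lemma cf_det: "cf_p \<alpha> (Suc n) * cf_q \<alpha> n - cf_p \<alpha> n * cf_q \<alpha> (Suc n) = (-1) ^ n"
proof (induction n)
  case (Suc n)
  have "cf_p \<alpha> (Suc (Suc n)) * cf_q \<alpha> (Suc n) - cf_p \<alpha> (Suc n) * cf_q \<alpha> (Suc (Suc n))
      = - (cf_p \<alpha> (Suc n) * cf_q \<alpha> n - cf_p \<alpha> n * cf_q \<alpha> (Suc n))"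
    by (simp add: algebra_simps)
  then show ?case using Suc by simp
qed simp

lemma cf_det_Suc_Suc:
  "cf_p \<alpha> (n + 2) * cf_q \<alpha> n - cf_p \<alpha> n * cf_q \<alpha> (n + 2) = (-1) ^ n * cf_a \<alpha> (n + 2)"
proof -
  have "cf_p \<alpha> (n + 2) * cf_q \<alpha> n - cf_p \<alpha> n * cf_q \<alpha> (n + 2)
      = cf_a \<alpha> (n + 2) * (cf_p \<alpha> (Suc n) * cf_q \<alpha> n - cf_p \<alpha> n * cf_q \<alpha> (Suc n))"
    by (simp add: numeral_2_eq_2 algebra_simps)
  then show ?thesis by (simp add: cf_det)
qed

lemma cf_convergent_diff_Suc_Suc:
  assumes "\<alpha> \<notin> \<rat>" and "0 < \<alpha>" and "\<alpha> < 1"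
  shows "cf_p \<alpha> (n + 2) / cf_q \<alpha> (n + 2) - cf_p \<alpha> n / cf_q \<alpha> n
           = (-1) ^ n * cf_a \<alpha> (n + 2) / (cf_q \<alpha> n * cf_q \<alpha> (n + 2))"
proof -
  have "real_of_int (cf_q \<alpha> n) \<noteq> 0" "real_of_int (cf_q \<alpha> (n + 2)) \<noteq> 0"
    using cf_q_ge_1[OF assms] by (metis of_int_0_eq_iff not_one_le_zero)+
  moreover have "real_of_int (cf_p \<alpha> (n + 2)) * cf_q \<alpha> n - cf_p \<alpha> n * cf_q \<alpha> (n + 2)
                   = (-1) ^ n * cf_a \<alpha> (n + 2)"
    using arg_cong[OF cf_det_Suc_Suc, of real_of_int] by simp
  ultimately show ?thesis by (simp add: field_simps)
qed

lemma cf_value_via_rem: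
  assumes "\<alpha> \<notin> \<rat>" and "0 < \<alpha>" and "\<alpha> < 1"
  shows "\<alpha> = (cf_p \<alpha> (Suc n) + cf_p \<alpha> n * cf_rem \<alpha> (Suc n))
               / (cf_q \<alpha> (Suc n) + cf_q \<alpha> n * cf_rem \<alpha> (Suc n))"
proof (induction n)
  case 0
  then show ?case by (simp add: inverse_cf_rem[of \<alpha> 0, symmetric])
next
  case (Suc n)
  define u where "u = cf_a \<alpha> (Suc (Suc n)) + cf_rem \<alpha> (Suc (Suc n))"
  have rem: "cf_rem \<alpha> (Suc n) = 1 / u"
    unfolding u_def inverse_cf_rem[symmetric] by simp
  have "0 < 1 / u"
    unfolding rem[symmetric] by (rule cf_rem_pos[OF assms(1,2)])
  then have "u \<noteq> 0" by auto
  have "\<alpha> = (cf_p \<alpha> (Suc n) + cf_p \<alpha> n * (1 / u)) / (cf_q \<alpha> (Suc n) + cf_q \<alpha> n * (1 / u))"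
    using Suc by (simp only: rem)
  also have "\<dots> = (cf_p \<alpha> (Suc n) * u + cf_p \<alpha> n) / (cf_q \<alpha> (Suc n) * u + cf_q \<alpha> n)"
    using \<open>u \<noteq> 0\<close> by (simp add: add_divide_eq_iff)
  also have "\<dots> = (cf_p \<alpha> (Suc (Suc n)) + cf_p \<alpha> (Suc n) * cf_rem \<alpha> (Suc (Suc n)))
                 / (cf_q \<alpha> (Suc (Suc n)) + cf_q \<alpha> (Suc n) * cf_rem \<alpha> (Suc (Suc n)))"
    by (simp add: u_def algebra_simps)
  finally show ?case .
qed

lemma cf_q_mult_sub_cf_p:
  assumes "\<alpha> \<notin> \<rat>" and "0 < \<alpha>" and "\<alpha> < 1"
  shows "real_of_int (cf_q \<alpha> n) * \<alpha> - cf_p \<alpha> n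
           = (-1) ^ n / (cf_q \<alpha> (Suc n) + cf_q \<alpha> n * cf_rem \<alpha> (Suc n))"
proof -
  define x where "x = cf_rem \<alpha> (Suc n)"
  define d where "d = cf_q \<alpha> (Suc n) + cf_q \<alpha> n * x"
  have "0 < x"
    unfolding x_def by (rule cf_rem_pos[OF assms(1,2)])
  then have "0 < d"
    using cf_q_ge_1[OF assms, of n] cf_q_ge_1[OF assms, of "Suc n"] unfolding d_def
    by (intro add_pos_nonneg) auto
  have "\<alpha> * d = cf_p \<alpha> (Suc n) + cf_p \<alpha> n * x"
    using cf_value_via_rem[OF assms, of n] \<open>0 < d\<close> unfolding d_def x_def[symmetric]
    by (simp add: field_simps)
  have "(cf_q \<alpha> n * \<alpha> - cf_p \<alpha> n) * d = cf_q \<alpha> n * (\<alpha> * d) - cf_p \<alpha> n * d"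
    by (simp add: algebra_simps)
  also have "\<dots> = real_of_int (cf_p \<alpha> (Suc n) * cf_q \<alpha> n - cf_p \<alpha> n * cf_q \<alpha> (Suc n))"
    by (simp only: \<open>\<alpha> * d = _\<close>) (simp add: d_def algebra_simps)
  also have "\<dots> = (-1) ^ n"
    by (simp add: cf_det)
  finally show ?thesis
    using \<open>0 < d\<close> unfolding d_def x_def by (simp add: field_simps)
qed

lemma cf_q_less_cf_rem_mult_cf_q:
  assumes "\<alpha> \<notin> \<rat>" and "0 < \<alpha>" and "\<alpha> < 1"
  shows "cf_q \<alpha> n < cf_rem \<alpha> (Suc n) * cf_q \<alpha> (n + 2)"
proof -
  define a where "a = real_of_int (cf_a \<alpha> (n + 2))"
  define y where "y = cf_rem \<alpha> (n + 2)"
  define q0 q1 q2 where "q0 = real_of_int (cf_q \<alpha> n)"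
    and "q1 = real_of_int (cf_q \<alpha> (n + 1))" and "q2 = real_of_int (cf_q \<alpha> (n + 2))"
  have "1 \<le> a" "0 < y" "y < 1"
    using cf_a_ge_1[OF assms, of "Suc n"] cf_rem_pos[OF assms(1,2)] cf_rem_less_1[OF assms(3)]
    by (simp_all add: a_def y_def)
  have "1 \<le> q0" "q0 \<le> q1"
    using cf_q_ge_1[OF assms, of n] cf_q_le_Suc[OF assms, of n] by (simp_all add: q0_def q1_def)
  have "q2 = a * q1 + q0"
    by (simp add: q0_def q1_def q2_def a_def numeral_2_eq_2)
  also have "a * q1 + q0 \<ge> (a + 1) * q0"
    using \<open>1 \<le> a\<close> \<open>q0 \<le> q1\<close> by (simp add: algebra_simps)
  finally have "(a + 1) * q0 \<le> q2" .
  moreover have "0 < (a + 1) * q0"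
    using \<open>1 \<le> a\<close> \<open>1 \<le> q0\<close> by simp
  ultimately have "0 < q2" by linarith
  have "q0 \<le> q2 / (a + 1)"
    using \<open>(a + 1) * q0 \<le> q2\<close> \<open>1 \<le> a\<close> by (simp add: field_simps)
  also have "q2 / (a + 1) < q2 / (a + y)"
    using \<open>0 < q2\<close> \<open>1 \<le> a\<close> \<open>0 < y\<close> \<open>y < 1\<close> by (intro divide_strict_left_mono) auto
  also have "\<dots> = cf_rem \<alpha> (Suc n) * q2"
    by (simp add: a_def y_def numeral_2_eq_2 flip: inverse_cf_rem)
  finally show ?thesis by (simp add: q0_def q2_def)
qed

lemma mult_powr_less_mult_powr:
  fixes q0 q1 q2 x \<tau> :: real
  assumes "0 < q0" and "q0 \<le> q1" and "q1 \<le> q2" and "q0 < x * q2" and "1 \<le> \<tau>"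
  shows "q1 * q0 powr \<tau> < x * q2 powr (\<tau> + 1)"
proof -
  have "q0 * q1 < (x * q2) * q2"
    using assms by (intro mult_less_le_imp_less) auto
  moreover have "0 < q0 powr (\<tau> - 1)" and "q0 powr (\<tau> - 1) \<le> q2 powr (\<tau> - 1)"
    using assms by (auto intro: powr_mono2)
  ultimately have "(q0 * q1) * q0 powr (\<tau> - 1) < ((x * q2) * q2) * q2 powr (\<tau> - 1)"
    using assms by (intro mult_less_le_imp_less) auto
  moreover have "q0 powr \<tau> = q0 * q0 powr (\<tau> - 1)" "q2 powr (\<tau> + 1) = q2 * q2 * q2 powr (\<tau> - 1)"
    using assms powr_mult_base[of q0 "\<tau> - 1"] powr_mult_base[of q2 "\<tau> - 1"]
      powr_mult_base[of q2 \<tau>] by (simp_all add: add.commute mult.assoc)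
  ultimately show ?thesis by (simp add: algebra_simps)
qed

lemma dist_int_le: "dist_int x \<le> \<bar>x - of_int p\<bar>"
  unfolding dist_int_def by (rule cInf_lower) (auto intro: bdd_belowI[of _ 0])

lemma Dioph_pos_less_1:
  assumes "\<alpha> \<in> Dioph \<gamma> \<tau>"
  shows "0 < \<alpha>" and "\<alpha> < 1"
  using assms by (simp_all add: Dioph_def)

lemma Dioph_le_abs_mult_sub:
  assumes "\<alpha> \<in> Dioph \<gamma> \<tau>" and "1 \<le> q"
  shows "\<gamma> / real_of_int q powr \<tau> \<le> \<bar>of_int q * \<alpha> - of_int p\<bar>"
proof -
  have "\<forall>q::nat. 1 \<le> q \<longrightarrow> \<gamma> / real q powr \<tau> \<le> dist_int (real q * \<alpha>)"
    using assms(1) by (simp add: Dioph_def)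
  then have "\<gamma> / real (nat q) powr \<tau> \<le> dist_int (real (nat q) * \<alpha>)"
    using assms(2) by (simp del: of_nat_nat)
  then show ?thesis
    using assms(2) dist_int_le[of "of_int q * \<alpha>" p] by simp
qed

lemma Dioph_not_Rats:
  assumes "0 < \<gamma>" and "\<alpha> \<in> Dioph \<gamma> \<tau>"
  shows "\<alpha> \<notin> \<rat>"
proof
  assume "\<alpha> \<in> \<rat>"
  then obtain p q where "0 < q" and "\<alpha> = of_int p / of_int q"
    by (rule Rats_cases') blast
  then have "\<gamma> / real_of_int q powr \<tau> \<le> 0"
    using Dioph_le_abs_mult_sub[OF assms(2), of q p] by simp
  with \<open>0 < \<gamma>\<close> \<open>0 < q\<close> show False
    by (simp add: divide_le_0_iff)
qed

lemma Dioph_threshold_denominator_pos: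
  fixes \<alpha> \<gamma> \<tau> :: real
  assumes "1 \<le> \<tau>" and "0 < \<gamma>" and "\<alpha> \<in> Dioph \<gamma> \<tau>"
  shows "0 < (1 / \<gamma> - cf_q \<alpha> (n+1) / real_of_int (cf_q \<alpha> n) powr \<tau>)
              - cf_q \<alpha> n * cf_q \<alpha> (n+1) / real_of_int (cf_q \<alpha> (n+2)) powr (\<tau> + 1)"
proof -
  have cf: "\<alpha> \<notin> \<rat>" "0 < \<alpha>" "\<alpha> < 1"
    using Dioph_not_Rats[OF assms(2,3)] Dioph_pos_less_1[OF assms(3)] by auto
  define q0 q1 q2 where "q0 = real_of_int (cf_q \<alpha> n)"
    and "q1 = real_of_int (cf_q \<alpha> (n + 1))" and "q2 = real_of_int (cf_q \<alpha> (n + 2))"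
  define x where "x = cf_rem \<alpha> (Suc n)"
  define A B where "A = q0 powr \<tau>" and "B = q2 powr (\<tau> + 1)"
  have "1 \<le> q0" "q0 \<le> q1" "q1 \<le> q2" "q0 < x * q2" "0 < x"
    using cf_q_ge_1[OF cf, of n] cf_q_le_Suc[OF cf, of n] cf_q_le_Suc[OF cf, of "Suc n"]
      cf_q_less_cf_rem_mult_cf_q[OF cf, of n] cf_rem_pos[OF cf(1,2)]
    by (simp_all add: q0_def q1_def q2_def x_def del: cf_q_Suc_Suc)
  then have "0 < A" "0 < B" "0 < q1 + q0 * x"
    by (simp_all add: A_def B_def add_pos_nonneg)
  have "\<gamma> / A \<le> \<bar>q0 * \<alpha> - cf_p \<alpha> n\<bar>"
    using Dioph_le_abs_mult_sub[OF assms(3)] cf_q_ge_1[OF cf] by (simp add: A_def q0_def)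
  also have "\<dots> = 1 / (q1 + q0 * x)"
    using cf_q_mult_sub_cf_p[OF cf, of n] \<open>0 < q1 + q0 * x\<close>
    by (simp add: q0_def q1_def x_def abs_mult)
  finally have "q1 / A + q0 * x / A \<le> 1 / \<gamma>"
    using \<open>0 < A\<close> \<open>0 < q1 + q0 * x\<close> \<open>0 < \<gamma>\<close> by (simp add: field_simps)
  moreover have "q1 * A < x * B"
    unfolding A_def B_def using \<open>1 \<le> q0\<close> \<open>q0 \<le> q1\<close> \<open>q1 \<le> q2\<close> \<open>q0 < x * q2\<close> assms(1)
    by (intro mult_powr_less_mult_powr) auto
  then have "q0 * q1 / B < q0 * x / A"
    using \<open>0 < A\<close> \<open>0 < B\<close> \<open>1 \<le> q0\<close> by (simp add: field_simps)
  ultimately show ?thesis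
    by (simp add: q0_def q1_def q2_def A_def B_def)
qed

lemma gap_less_iff_threshold_less:
  fixes a q0 q1 q2 \<gamma> A B :: real
  assumes "0 < q0" and "0 < q1" and "0 \<le> a" and "0 < \<gamma>" and "0 < A" and "0 < B"
    and "q2 = a * q1 + q0" and "0 < (1 / \<gamma> - q1 / A) - q0 * q1 / B"
  shows "\<gamma> / (q0 * A) + \<gamma> / B < a / (q0 * q2)
           \<longleftrightarrow> q0 / (\<gamma> * q1) * (1 / ((1 / \<gamma> - q1 / A) - q0 * q1 / B)) - q0 / q1 < a"
proof -
  define D where "D = (1 / \<gamma> - q1 / A) - q0 * q1 / B"
  define E where "E = \<gamma> * q2 * (1 / A + q0 / B)"
  have "0 < q2" "0 < D"
    using assms by (simp_all add: D_def add_nonneg_pos)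
  have D_E: "\<gamma> * q2 * D - q0 = q2 - q0 - q1 * E"
    using assms by (simp add: D_def E_def field_simps)
  have "(\<gamma> / (q0 * A) + \<gamma> / B) * (q0 * q2) = E"
    using assms by (simp add: E_def field_simps)
  then have "\<gamma> / (q0 * A) + \<gamma> / B < a / (q0 * q2) \<longleftrightarrow> E < a"
    using \<open>0 < q2\<close> assms(1) by (simp add: pos_less_divide_eq)
  also have "\<dots> \<longleftrightarrow> q1 * E < q2 - q0"
    using assms by (simp add: mult.commute[of a])
  also have "\<dots> \<longleftrightarrow> q0 < \<gamma> * q2 * D"
    using D_E by linarith
  also have "\<dots> \<longleftrightarrow> q0 / (\<gamma> * q1 * D) < a + q0 / q1"
    using \<open>0 < D\<close> assms by (simp add: field_simps)
  finally show ?thesis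
    by (simp add: D_def algebra_simps)
qed

theorem lemma4:
  fixes \<tau> \<gamma> \<alpha> :: real and n :: nat
  assumes "\<tau> > 1" and "\<gamma> > 0" and "\<alpha> \<in> Dioph \<gamma> \<tau>" and "even n"
  shows "(cf_p \<alpha> n / cf_q \<alpha> n + \<gamma> / real_of_int (cf_q \<alpha> n) powr (\<tau> + 1)
            < cf_p \<alpha> (n+2) / cf_q \<alpha> (n+2) - \<gamma> / real_of_int (cf_q \<alpha> (n+2)) powr (\<tau> + 1))
     \<longleftrightarrow>
     (real_of_int (cf_a \<alpha> (n+2)) >
        real_of_int (cf_q \<alpha> n) / (\<gamma> * cf_q \<alpha> (n+1)) *
          (1 / ((1 / \<gamma> - cf_q \<alpha> (n+1) / real_of_int (cf_q \<alpha> n) powr \<tau>)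
                - cf_q \<alpha> n * cf_q \<alpha> (n+1) / real_of_int (cf_q \<alpha> (n+2)) powr (\<tau> + 1)))
        - real_of_int (cf_q \<alpha> n) / cf_q \<alpha> (n+1))"
proof -
  have cf: "\<alpha> \<notin> \<rat>" "0 < \<alpha>" "\<alpha> < 1"
    using Dioph_not_Rats[OF assms(2,3)] Dioph_pos_less_1[OF assms(3)] by auto
  define q0 q1 q2 where "q0 = real_of_int (cf_q \<alpha> n)"
    and "q1 = real_of_int (cf_q \<alpha> (n + 1))" and "q2 = real_of_int (cf_q \<alpha> (n + 2))"
  define a where "a = real_of_int (cf_a \<alpha> (n + 2))"
  have "1 \<le> q0" "q0 \<le> q1" "1 \<le> q2" "1 \<le> a"
    using cf_q_ge_1[OF cf, of n] cf_q_le_Suc[OF cf, of n] cf_q_ge_1[OF cf, of "n + 2"]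
      cf_a_ge_1[OF cf, of "Suc n"]
    by (simp_all add: q0_def q1_def q2_def a_def numeral_2_eq_2 del: cf_q_Suc_Suc)
  have "q2 = a * q1 + q0"
    by (simp add: q0_def q1_def q2_def a_def numeral_2_eq_2)
  have denominator_pos: "0 < (1 / \<gamma> - q1 / q0 powr \<tau>) - q0 * q1 / q2 powr (\<tau> + 1)"
    using Dioph_threshold_denominator_pos[OF _ assms(2,3), of n] assms(1)
    unfolding q0_def q1_def q2_def by simp
  have "cf_p \<alpha> (n + 2) / q2 - cf_p \<alpha> n / q0 = a / (q0 * q2)"
    using cf_convergent_diff_Suc_Suc[OF cf, of n] \<open>even n\<close> by (simp add: q0_def q2_def a_def)
  moreover have "q0 powr (\<tau> + 1) = q0 * q0 powr \<tau>"
    using \<open>1 \<le> q0\<close> by (simp add: powr_mult_base add.commute)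
  ultimately have "(cf_p \<alpha> n / q0 + \<gamma> / q0 powr (\<tau> + 1) < cf_p \<alpha> (n + 2) / q2 - \<gamma> / q2 powr (\<tau> + 1))
      \<longleftrightarrow> \<gamma> / (q0 * q0 powr \<tau>) + \<gamma> / q2 powr (\<tau> + 1) < a / (q0 * q2)"
    by auto
  also have "\<dots> \<longleftrightarrow> q0 / (\<gamma> * q1) * (1 / ((1 / \<gamma> - q1 / q0 powr \<tau>) - q0 * q1 / q2 powr (\<tau> + 1)))
      - q0 / q1 < a"
    using \<open>1 \<le> q0\<close> \<open>q0 \<le> q1\<close> \<open>1 \<le> q2\<close> \<open>1 \<le> a\<close> assms(2)
    by (intro gap_less_iff_threshold_less[OF _ _ _ _ _ _ \<open>q2 = a * q1 + q0\<close> denominator_pos]) auto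
  finally show ?thesis
    using \<open>1 \<le> q2\<close> by (simp add: q0_def q1_def q2_def a_def)
qed

end
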